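(* Let $d\ge0$ be an integer. There exist an instance domain $\mathcal{X}$ and a hypothesis class $\mathcal{H}$ with Littlestone dimension $d$ such that the following holds for all integers $k,l\ge0$: if $k<l+d$, then for any $a\ge 0$ there exists a strategy of the adversary, all of whose presented sequences satisfy the $l$-bias assumption with respect to $\mathcal{H}$, such that any algorithm guaranteeing a cumulative mistake penalty of at most $k$ in the randomized prediction model must have cumulative abstention penalty at least $a$.
   Context: Randomized prediction model: at round $t$ the adversary presents $x_t\in\mathcal{X}$; the learner outputs $(p_{t,-},p_{t,+},1-p_{t,-}-p_{t,+})$ with $p_{t,-},p_{t,+}\ge0$, $p_{t,-}+p_{t,+}\le 1$ (probabilities of predicting $-1$, $+1$, abstaining); the adversary reveals $y_t\in\{-1,+1\}$. After $n$ rounds the cumulative mistake penalty is $\sum_{t=1}^n \big(I(y_t=-1)p_{t,+}+I(y_t=+1)p_{t,-}\big)$ and the cumulative abstention penalty is $\sum_{t=1}^n(1-p_{t,+}-p_{t,-})$. Hypotheses are maps $\mathcal{X}\to\{-1,+1\}$. $\mathcal{C}^l$ is the class of functions $x\mapsto 1-2I(x\in D)$ for $D\subseteq\mathcal{X}$, $|D|\le l$, and $\mathcal{H}^l=\{x\mapsto h(x)c(x): h\in\mathcal{H},c\in\mathcal{C}^l\}$. A sequence $(x_1,y_1),\dots,(x_n,y_n)$ satisfies the $l$-bias assumption w.r.t. $\mathcal{H}$ if some $h\in\mathcal{H}^l$ has $h(x_t)=y_t$ for all $t$. The Littlestone dimension of $\mathcal{H}$ is the largest $d$ such that there is a complete binary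 tree of depth $d$ with internal nodes labeled by points of $\mathcal{X}$ such that for every root-to-leaf path (left = label $-1$, right = label $+1$) some $h\in\mathcal{H}$ agrees with all labels on the path. *)

theory Defs
  imports Main "HOL-Library.Indicator_Function" Complex_Main
begin

definition hyp_class :: "'x set \<Rightarrow> ('x \<Rightarrow> int) set \<Rightarrow> bool" where
  "hyp_class X H \<longleftrightarrow> H \<subseteq> {h. \<forall>x\<in>X. h x \<in> {-1, 1}}"

text \<open>A complete binary tree of depth d with internal nodes labelled by points of X.
A node is addressed by the list of labels (left = -1, right = +1) on the path from the root.\<close>

definition shattered_tree :: "'x set \<Rightarrow> ('x \<Rightarrow> int) set \<Rightarrow> nat \<Rightarrow> (int list \<Rightarrow> 'x) \<Rightarrow> bool" where
  "shattered_tree X H d T \<longleftrightarrow>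
     (\<forall>s. length s < d \<and> set s \<subseteq> {-1, 1} \<longrightarrow> T s \<in> X) \<and>
     (\<forall>ys. length ys = d \<and> set ys \<subseteq> {-1, 1} \<longrightarrow>
        (\<exists>h\<in>H. \<forall>i<d. h (T (take i ys)) = ys ! i))"

definition littlestone_dim :: "'x set \<Rightarrow> ('x \<Rightarrow> int) set \<Rightarrow> nat \<Rightarrow> bool" where
  "littlestone_dim X H d \<longleftrightarrow>
     (\<exists>T. shattered_tree X H d T) \<and> (\<forall>d' T. shattered_tree X H d' T \<longrightarrow> d' \<le> d)"

definition flip_class :: "'x set \<Rightarrow> nat \<Rightarrow> ('x \<Rightarrow> int) set" where
  "flip_class X l = {(\<lambda>x. 1 - 2 * indicator D x) | D. D \<subseteq> X \<and> finite D \<and> card D \<le> l}"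

definition biased_class :: "'x set \<Rightarrow> ('x \<Rightarrow> int) set \<Rightarrow> nat \<Rightarrow> ('x \<Rightarrow> int) set" where
  "biased_class X H l = {(\<lambda>x. h x * c x) | h c. h \<in> H \<and> c \<in> flip_class X l}"

definition l_bias :: "'x set \<Rightarrow> ('x \<Rightarrow> int) set \<Rightarrow> nat \<Rightarrow> ('x \<times> int) list \<Rightarrow> bool" where
  "l_bias X H l seq \<longleftrightarrow> (\<exists>h\<in>biased_class X H l. \<forall>(x, y)\<in>set seq. h x = y)"

text \<open>A history entry is (x_t, (p_{t,-}, p_{t,+}), y_t).\<close>

type_synonym 'x hist = "('x \<times> (real \<times> real) \<times> int) list"

definition valid_learner :: "(('x \<times> int) list \<Rightarrow> 'x \<Rightarrow> real \<times> real) \<Rightarrow> bool" where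
  "valid_learner L \<longleftrightarrow> (\<forall>s x. 0 \<le> fst (L s x) \<and> 0 \<le> snd (L s x) \<and> fst (L s x) + snd (L s x) \<le> 1)"

definition labelled :: "'x hist \<Rightarrow> ('x \<times> int) list" where
  "labelled h = map (\<lambda>(x, p, y). (x, y)) h"

fun play :: "('x hist \<Rightarrow> 'x) \<Rightarrow> ('x hist \<Rightarrow> 'x \<Rightarrow> real \<times> real \<Rightarrow> int)
              \<Rightarrow> (('x \<times> int) list \<Rightarrow> 'x \<Rightarrow> real \<times> real) \<Rightarrow> nat \<Rightarrow> 'x hist" where
  "play ax ay L 0 = []"
| "play ax ay L (Suc t) =
     (let h = play ax ay L t; x = ax h; p = L (labelled h) x; y = ay h x p
      in h @ [(x, p, y)])"

definition mistake_penalty :: "'x hist \<Rightarrow> real" where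
  "mistake_penalty h = (\<Sum>(x, (pm, pp), y)\<leftarrow>h.
      (if y = -1 then pp else 0) + (if y = 1 then pm else 0))"

definition abstention_penalty :: "'x hist \<Rightarrow> real" where
  "abstention_penalty h = (\<Sum>(x, (pm, pp), y)\<leftarrow>h. 1 - pp - pm)"

end

theory Submission
  imports Defs
begin

text \<open>The class consists of the labellings of the natural numbers with at most d negative
points; its Littlestone dimension is d, and it absorbs l further sign flips, so any sequence of
distinct points with at most l + d negative labels is l-biased. Let m = l + d and
\<open>\<tau> = k / m < 1\<close>. The adversary presents fresh points and answers -1 exactly when the learner
puts probability more than \<open>\<tau>\<close> on +1, until m negative labels are used up. If all m were used,
the mistake penalty would exceed \<open>m \<tau> = k\<close>; otherwise every positively labelled round costs at
least \<open>1 - \<tau>\<close> in mistake plus abstention penalty, and all but fewer than m rounds are such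
rounds. With a long enough game the abstention penalty therefore exceeds any a.\<close>

definition few_negatives :: "nat \<Rightarrow> ('x \<Rightarrow> int) set" where
  "few_negatives d = {h. (\<forall>x. h x \<in> {-1, 1}) \<and> finite {x. h x = -1} \<and> card {x. h x = -1} \<le> d}"

lemma shattered_tree_length_few_negatives:
  "shattered_tree UNIV (few_negatives d) d length"
  unfolding shattered_tree_def
proof (intro conjI allI impI)
  fix ys :: "int list" assume ys: "length ys = d \<and> set ys \<subseteq> {-1, 1}"
  define h where "h = (\<lambda>x. if x < d then ys ! x else 1)"
  have "\<forall>x. h x \<in> {-1, 1}" using ys nth_mem unfolding h_def by fastforce
  moreover have "{x. h x = -1} \<subseteq> {..<d}" unfolding h_def by auto
  then have "finite {x. h x = -1}" "card {x. h x = -1} \<le> d"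
    by (auto intro: finite_subset dest: card_mono[rotated])
  ultimately have "h \<in> few_negatives d" unfolding few_negatives_def by auto
  moreover have "\<forall>i<d. h (length (take i ys)) = ys ! i" using ys unfolding h_def by auto
  ultimately show "\<exists>h\<in>few_negatives d. \<forall>i<d. h (length (take i ys)) = ys ! i" by blast
qed auto

lemma shattered_tree_realizes_path:
  assumes "shattered_tree X H n T" "length s = n" "set s \<subseteq> {-1, 1}"
  obtains h where "h \<in> H" "\<forall>i<n. h (T (take i s)) = s ! i"
  using assms unfolding shattered_tree_def by blast

text \<open>Follow the leftmost path. If its nodes are distinct, a hypothesis realizing it has n
negative points. Otherwise some node repeats at depths j < i, and the path turning right at
depth i asks for two different labels at that node.\<close>

lemma shattered_tree_few_negatives_le:
  assumes "shattered_tree X (few_negatives d) n T"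
  shows "n \<le> d"
proof (cases "inj_on (\<lambda>i. T (replicate i (-1))) {..<n}")
  case True
  obtain h where h: "h \<in> few_negatives d"
    and realizes: "\<forall>i<n. h (T (take i (replicate n (-1)))) = replicate n (-1) ! i"
    by (rule shattered_tree_realizes_path[OF assms, of "replicate n (-1)"])
      (auto simp: set_replicate_conv_if)
  have negatives: "(\<lambda>i. T (replicate i (-1))) ` {..<n} \<subseteq> {x. h x = -1}"
    using realizes by auto
  have "n = card ((\<lambda>i. T (replicate i (-1))) ` {..<n})"
    using card_image[OF True] by simp
  also have "\<dots> \<le> card {x. h x = -1}"
    using h negatives card_mono unfolding few_negatives_def by blast
  also have "\<dots> \<le> d"
    using h unfolding few_negatives_def by blast
  finally show ?thesis .
next
  case False
  then obtain i j where ij: "i < n" "j < n" "i \<noteq> j" "T (replicate i (-1)) = T (replicate j (-1))"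
    unfolding inj_on_def by blast
  define p where "p = max i j"
  define s :: "int list" where "s = replicate p (-1) @ replicate (n - p) 1"
  have "p < n" "min i j < p" using ij unfolding p_def by auto
  have same_node: "T (take (min i j) s) = T (take p s)"
    using ij(4) unfolding s_def p_def by (simp add: min_def max_def)
  obtain h where "\<forall>q<n. h (T (take q s)) = s ! q"
    by (rule shattered_tree_realizes_path[OF assms, of s])
      (use \<open>p < n\<close> in \<open>auto simp: s_def set_replicate_conv_if\<close>)
  moreover have "s ! min i j = -1" "s ! p = 1"
    using \<open>p < n\<close> \<open>min i j < p\<close> unfolding s_def by (simp_all add: nth_append)
  ultimately have "h (T (take (min i j) s)) = -1" "h (T (take p s)) = 1"
    using \<open>p < n\<close> \<open>min i j < p\<close> by auto
  with same_node show ?thesis by simp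
qed

lemma littlestone_dim_few_negatives:
  "littlestone_dim UNIV (few_negatives d :: (nat \<Rightarrow> int) set) d"
  unfolding littlestone_dim_def
proof (intro conjI allI impI exI)
  show "shattered_tree UNIV (few_negatives d) d length"
    by (rule shattered_tree_length_few_negatives)
qed (rule shattered_tree_few_negatives_le)

definition negatives :: "('x \<times> int) list \<Rightarrow> nat" where
  "negatives s = length (filter (\<lambda>(x, y). y = -1) s)"

lemma few_negatives_in_biased_class:
  fixes g :: "'x \<Rightarrow> int"
  assumes g: "\<forall>x. g x \<in> {-1, 1}" "finite {x. g x = -1}" "card {x. g x = -1} \<le> l + d"
  shows "g \<in> biased_class UNIV (few_negatives d) l"
proof -
  define N where "N = {x. g x = -1}"
  obtain N0 where N0: "N0 \<subseteq> N" "card N0 = min d (card N)"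
    using obtain_subset_with_card_n[of "min d (card N)" N] by auto
  define h :: "'x \<Rightarrow> int" where "h x = (if x \<in> N0 then -1 else 1)" for x
  define D where "D = N - N0"
  have "finite N0" using N0(1) g(2) unfolding N_def by (rule finite_subset)
  have "{x. h x = -1} = N0" unfolding h_def by auto
  then have "h \<in> few_negatives d"
    using N0 \<open>finite N0\<close> unfolding few_negatives_def h_def by auto
  moreover have "(\<lambda>x. 1 - 2 * indicator D x) \<in> flip_class UNIV l"
    using g N0 \<open>finite N0\<close> unfolding flip_class_def D_def N_def by (auto simp: card_Diff_subset)
  moreover have "g = (\<lambda>x. h x * (1 - 2 * indicator D x))"
    using g(1) N0(1) unfolding h_def D_def N_def by (force simp: indicator_def)
  ultimately show ?thesis unfolding biased_class_def by fast
qed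

lemma l_bias_few_negatives:
  fixes s :: "('x \<times> int) list"
  assumes "distinct (map fst s)" "snd ` set s \<subseteq> {-1, 1}" "negatives s \<le> l + d"
  shows "l_bias UNIV (few_negatives d) l s"
proof -
  define g where "g x = (case map_of s x of Some y \<Rightarrow> y | None \<Rightarrow> 1)" for x
  have g_on_s: "g x = y" if "(x, y) \<in> set s" for x y
    using assms(1) that unfolding g_def by simp
  have g_values: "g x \<in> {-1, 1}" for x
    using assms(2) unfolding g_def by (force split: option.split dest: map_of_SomeD)
  have neg_sub: "{x. g x = -1} \<subseteq> fst ` set (filter (\<lambda>(x, y). y = -1) s)"
  proof
    fix x assume "x \<in> {x. g x = -1}"
    then have "map_of s x = Some (-1)" unfolding g_def by (auto split: option.splits)
    then show "x \<in> fst ` set (filter (\<lambda>(x, y). y = -1) s)"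
      by (force dest: map_of_SomeD)
  qed
  have "card {x. g x = -1} \<le> card (fst ` set (filter (\<lambda>(x, y). y = -1) s))"
    using neg_sub by (rule card_mono[rotated]) simp
  also have "\<dots> \<le> negatives s"
    unfolding negatives_def by (meson card_image_le card_length finite_set order.trans)
  finally have "g \<in> biased_class UNIV (few_negatives d) l"
    using assms(3) neg_sub g_values by (intro few_negatives_in_biased_class) (auto intro: finite_subset)
  then show ?thesis unfolding l_bias_def using g_on_s by blast
qed

lemma length_play: "length (play ax ay L t) = t"
  by (induction t) (simp_all add: Let_def)

definition fresh_point :: "'x hist \<Rightarrow> nat" where
  "fresh_point hs = length hs"

definition threshold_label :: "nat \<Rightarrow> real \<Rightarrow> 'x hist \<Rightarrow> 'x \<Rightarrow> real \<times> real \<Rightarrow> int" where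
  "threshold_label m \<tau> hs x p = (if negatives (labelled hs) < m \<and> \<tau> < snd p then -1 else 1)"

lemma play_fresh_point_Suc:
  "play fresh_point ay L (Suc t) =
     (let h = play fresh_point ay L t; p = L (labelled h) t in h @ [(t, p, ay h t p)])"
  by (simp add: Let_def fresh_point_def length_play)

lemma labelled_snoc [simp]: "labelled (h @ [(x, p, y)]) = labelled h @ [(x, y)]"
  by (simp add: labelled_def)

lemma negatives_snoc [simp]: "negatives (s @ [(x, y)]) = negatives s + (if y = -1 then 1 else 0)"
  by (simp add: negatives_def)

lemma mistake_penalty_snoc [simp]:
  "mistake_penalty (h @ [(x, (pm, pp), y)]) =
     mistake_penalty h + (if y = -1 then pp else 0) + (if y = 1 then pm else 0)"
  by (simp add: mistake_penalty_def)

lemma abstention_penalty_snoc [simp]: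
  "abstention_penalty (h @ [(x, (pm, pp), y)]) = abstention_penalty h + (1 - pp - pm)"
  by (simp add: abstention_penalty_def)

lemma map_fst_labelled_play_fresh_point:
  "map fst (labelled (play fresh_point ay L t)) = [0..<t]"
  by (induction t) (simp_all add: play_fresh_point_Suc Let_def labelled_def del: play.simps(2))

lemma labels_play_threshold_label:
  "snd ` set (labelled (play fresh_point (threshold_label m \<tau>) L t)) \<subseteq> {-1, 1}"
  by (induction t)
    (auto simp: play_fresh_point_Suc Let_def labelled_def threshold_label_def simp del: play.simps(2))

lemma negatives_play_threshold_label_le:
  "negatives (labelled (play fresh_point (threshold_label m \<tau>) L t)) \<le> m"
proof (induction t)
  case (Suc t)
  then show ?case by (simp add: play_fresh_point_Suc Let_def threshold_label_def del: play.simps(2))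
qed (simp add: negatives_def labelled_def)

lemma l_bias_play_threshold_label:
  "l_bias UNIV (few_negatives d) l (labelled (play fresh_point (threshold_label (l + d) \<tau>) L t))"
  by (intro l_bias_few_negatives labels_play_threshold_label negatives_play_threshold_label_le)
    (simp add: map_fst_labelled_play_fresh_point)

context
  fixes L :: "(nat \<times> int) list \<Rightarrow> nat \<Rightarrow> real \<times> real" and m :: nat and \<tau> :: real
  assumes valid: "valid_learner L"
begin

abbreviation threshold_game :: "nat \<Rightarrow> nat hist" where
  "threshold_game \<equiv> play fresh_point (threshold_label m \<tau>) L"

lemma threshold_game_Suc:
  obtains pm pp where "0 \<le> pm" "0 \<le> pp" "pm + pp \<le> 1"
    "threshold_game (Suc t) =
       threshold_game t @ [(t, (pm, pp),
         if negatives (labelled (threshold_game t)) < m \<and> \<tau> < pp then -1 else 1)]"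
proof -
  obtain pm pp where p: "L (labelled (threshold_game t)) t = (pm, pp)" by fastforce
  moreover have "0 \<le> pm \<and> 0 \<le> pp \<and> pm + pp \<le> 1"
    using valid p unfolding valid_learner_def by (metis fst_conv snd_conv)
  ultimately show thesis
    by (intro that) (simp_all add: play_fresh_point_Suc Let_def threshold_label_def del: play.simps(2))
qed

lemma mistake_penalty_threshold_game_ge:
  "real (negatives (labelled (threshold_game t))) * \<tau> \<le> mistake_penalty (threshold_game t)"
proof (induction t)
  case 0
  then show ?case by (simp add: negatives_def labelled_def mistake_penalty_def)
next
  case (Suc t)
  show ?case by (rule threshold_game_Suc[of t]) (use Suc in \<open>auto simp: algebra_simps\<close>)
qed

lemma mistake_penalty_threshold_game_gt:
  "0 < negatives (labelled (threshold_game t)) \<Longrightarrow>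
     real (negatives (labelled (threshold_game t))) * \<tau> < mistake_penalty (threshold_game t)"
proof (induction t)
  case 0
  then show ?case by (simp add: negatives_def labelled_def)
next
  case (Suc t)
  show ?case
    by (rule threshold_game_Suc[of t])
      (use Suc mistake_penalty_threshold_game_ge[of t] in \<open>auto simp: algebra_simps split: if_splits\<close>)
qed

lemma penalties_threshold_game_ge:
  "negatives (labelled (threshold_game t)) < m \<Longrightarrow>
     (real t - negatives (labelled (threshold_game t))) * (1 - \<tau>)
       \<le> abstention_penalty (threshold_game t) + mistake_penalty (threshold_game t)"
proof (induction t)
  case 0
  then show ?case by (simp add: negatives_def labelled_def mistake_penalty_def abstention_penalty_def)
next
  case (Suc t)
  show ?case
    by (rule threshold_game_Suc[of t])
      (use Suc in \<open>auto simp: algebra_simps split: if_splits\<close>)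
qed

lemma abstention_penalty_threshold_game_ge:
  assumes "k < m" "\<tau> = k / m" and mistakes: "mistake_penalty (threshold_game n) \<le> k"
  shows "(real n - m) * (1 - \<tau>) - k \<le> abstention_penalty (threshold_game n)"
proof -
  let ?c = "negatives (labelled (threshold_game n))"
  have "real m * \<tau> = k" "\<tau> \<le> 1" using assms(1,2) by auto
  then have "?c \<noteq> m"
    using mistake_penalty_threshold_game_gt[of n] mistakes assms(1) by fastforce
  then have "?c < m" using negatives_play_threshold_label_le[of m \<tau> L n] by simp
  have "(real n - m) * (1 - \<tau>) \<le> (real n - ?c) * (1 - \<tau>)"
    using \<open>?c < m\<close> \<open>\<tau> \<le> 1\<close> by (intro mult_right_mono) auto
  also have "\<dots> \<le> abstention_penalty (threshold_game n) + mistake_penalty (threshold_game n)"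
    using \<open>?c < m\<close> by (rule penalties_threshold_game_ge)
  finally show ?thesis using mistakes by linarith
qed

end

lemma threshold_adversary_forces_abstention:
  assumes "k < l + d"
  shows "\<exists>n (ax :: nat hist \<Rightarrow> nat) (ay :: nat hist \<Rightarrow> nat \<Rightarrow> real \<times> real \<Rightarrow> int).
           (\<forall>L. valid_learner L \<longrightarrow> l_bias UNIV (few_negatives d) l (labelled (play ax ay L n))) \<and>
           (\<forall>L. valid_learner L \<longrightarrow> mistake_penalty (play ax ay L n) \<le> real k \<longrightarrow>
                abstention_penalty (play ax ay L n) \<ge> a)"
proof -
  define \<tau> where "\<tau> = real k / real (l + d)"
  define n where "n = l + d + nat \<lceil>(a + k) / (1 - \<tau>)\<rceil>"
  have "\<tau> < 1" using assms unfolding \<tau>_def by auto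
  moreover have "(a + k) / (1 - \<tau>) \<le> real (nat \<lceil>(a + k) / (1 - \<tau>)\<rceil>)"
    by (rule real_nat_ceiling_ge)
  ultimately have enough_rounds: "a \<le> (real n - (l + d)) * (1 - \<tau>) - k"
    unfolding n_def by (simp add: pos_divide_le_eq)
  show ?thesis
  proof (intro exI[of _ n] exI[of _ fresh_point] exI[of _ "threshold_label (l + d) \<tau>"] conjI allI impI)
    fix L assume "valid_learner L" "mistake_penalty (threshold_game L (l + d) \<tau> n) \<le> k"
    then have "(real n - (l + d)) * (1 - \<tau>) - k \<le> abstention_penalty (threshold_game L (l + d) \<tau> n)"
      by (rule abstention_penalty_threshold_game_ge[OF _ assms \<tau>_def])
    with enough_rounds show "a \<le> abstention_penalty (threshold_game L (l + d) \<tau> n)" by simp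
  qed (simp_all add: l_bias_play_threshold_label)
qed

theorem mainTheorem4:
  fixes d :: nat
  shows "\<exists>(X :: nat set) (H :: (nat \<Rightarrow> int) set).
    hyp_class X H \<and> littlestone_dim X H d \<and>
    (\<forall>k l :: nat. k < l + d \<longrightarrow>
      (\<forall>a :: real. a \<ge> 0 \<longrightarrow>
        (\<exists>(n :: nat) (ax :: nat hist \<Rightarrow> nat) (ay :: nat hist \<Rightarrow> nat \<Rightarrow> real \<times> real \<Rightarrow> int).
           (\<forall>hs. ax hs \<in> X) \<and>
           (\<forall>L. valid_learner L \<longrightarrow> l_bias X H l (labelled (play ax ay L n))) \<and>
           (\<forall>L. valid_learner L \<longrightarrow> mistake_penalty (play ax ay L n) \<le> real k \<longrightarrow>
                abstention_penalty (play ax ay L n) \<ge> a))))"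
proof (rule exI[of _ UNIV], rule exI[of _ "few_negatives d"], intro conjI allI impI)
  show "hyp_class UNIV (few_negatives d :: (nat \<Rightarrow> int) set)"
    unfolding hyp_class_def few_negatives_def by auto
  show "littlestone_dim UNIV (few_negatives d :: (nat \<Rightarrow> int) set) d"
    by (rule littlestone_dim_few_negatives)
qed (use threshold_adversary_forces_abstention in blast)

end
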